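(* Let $\mathsf{S}$ be a random sprinkle in $d$-dimensional Minkowski spacetime, i.e. the set of points of a Poisson point process with intensity $\rho\cdot\nu$ ($\rho>0$ constant, $\nu$ Lebesgue volume measure), with the causal order restricted from Minkowski spacetime. Then, with probability $1$, $\mathsf{S}$ contains no pair of distinct singleton-symmetric elements.
   Context: Minkowski spacetime $\mathbb{M}^d$ is $\mathbb{R}^{1,d-1}$ with metric $\mathrm{diag}(1,-1,\dots,-1)$, partially ordered by $x\le y$ iff $y-x$ is zero or a future-directed causal vector. In a poset $P$, $b$ covers $a$ if $a<b$ and no $c$ satisfies $a<c<b$; $L^-(a)$ is the set of elements covered by $a$ and $L^+(a)$ the set of elements covering $a$. Two elements $a,b\in P$ are singleton-symmetric if $L^-(a)=L^-(b)$ and $L^+(a)=L^+(b)$. *)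

theory Defs
  imports "HOL-Probability.Probability"
begin

text \<open>Points of d-dimensional Minkowski spacetime, d = CARD('n) + 1:
  a time coordinate and a spatial vector in real^'n.  The product type is a
  Euclidean space, so lborel is its Lebesgue (volume) measure.\<close>

type_synonym 'n mpoint = "real \<times> (real ^ 'n)"

definition mink_sq :: "'n::finite mpoint \<Rightarrow> real" where
  "mink_sq v = (fst v)\<^sup>2 - (\<Sum>i\<in>UNIV. (snd v $ i)\<^sup>2)"

definition causal_le :: "'n::finite mpoint \<Rightarrow> 'n mpoint \<Rightarrow> bool" where
  "causal_le x y \<longleftrightarrow> y - x = 0 \<or> (mink_sq (y - x) \<ge> 0 \<and> fst (y - x) > 0)"

definition covers_in :: "'a set \<Rightarrow> ('a \<Rightarrow> 'a \<Rightarrow> bool) \<Rightarrow> 'a \<Rightarrow> 'a \<Rightarrow> bool" where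
  "covers_in P le a b \<longleftrightarrow> a \<in> P \<and> b \<in> P \<and> le a b \<and> a \<noteq> b \<and>
     \<not> (\<exists>c\<in>P. le a c \<and> a \<noteq> c \<and> le c b \<and> c \<noteq> b)"

definition Lminus :: "'a set \<Rightarrow> ('a \<Rightarrow> 'a \<Rightarrow> bool) \<Rightarrow> 'a \<Rightarrow> 'a set" where
  "Lminus P le a = {x \<in> P. covers_in P le x a}"

definition Lplus :: "'a set \<Rightarrow> ('a \<Rightarrow> 'a \<Rightarrow> bool) \<Rightarrow> 'a \<Rightarrow> 'a set" where
  "Lplus P le a = {x \<in> P. covers_in P le a x}"

definition singleton_symmetric :: "'a set \<Rightarrow> ('a \<Rightarrow> 'a \<Rightarrow> bool) \<Rightarrow> 'a \<Rightarrow> 'a \<Rightarrow> bool" where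
  "singleton_symmetric P le a b \<longleftrightarrow> Lminus P le a = Lminus P le b \<and> Lplus P le a = Lplus P le b"

definition poisson_point_process ::
  "'b measure \<Rightarrow> real \<Rightarrow> ('b \<Rightarrow> ('a::euclidean_space) set) \<Rightarrow> bool" where
  "poisson_point_process M \<rho> S \<longleftrightarrow>
     (\<forall>A. A \<in> sets lborel \<and> emeasure lborel A < \<infinity> \<longrightarrow>
        (AE \<omega> in M. finite (S \<omega> \<inter> A)) \<and>
        (\<lambda>\<omega>. card (S \<omega> \<inter> A)) \<in> measurable M (count_space UNIV) \<and>
        (\<forall>k::nat. measure M {\<omega> \<in> space M. card (S \<omega> \<inter> A) = k} =
            (\<rho> * measure lborel A) ^ k / fact k * exp (- (\<rho> * measure lborel A)))) \<and>
     (\<forall>(I::nat set) F. (\<forall>i\<in>I. F i \<in> sets lborel \<and> emeasure lborel (F i) < \<infinity>) \<and>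
        disjoint_family_on F I \<longrightarrow>
        prob_space.indep_vars M (\<lambda>_. count_space UNIV) (\<lambda>i \<omega>. card (S \<omega> \<inter> F i)) I)"

end

theory Submission
  imports Defs
begin

text \<open>Let a, b be distinct points of the sprinkle, say b is not below a. With starting point,
  null direction and radius taken from countable sets, some ray of disjoint balls lies strictly
  in the future of a and outside the future of b. Such a ray has infinite volume, so a Poisson
  process of positive intensity meets it almost surely, and then a.s. it meets all of the
  countably many rays at once. If x is a sprinkled point on the ray, the sprinkled
  point of least time in the causal interval from a to x (finite, since the sprinkle is
  a.s. locally finite) covers a but lies outside the future of b; so L+(a) differs from L+(b).\<close>

lemma causal_le_iff_norm:
  "causal_le x (y::'n::finite mpoint) \<longleftrightarrow> norm (snd y - snd x) \<le> fst y - fst x"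
proof -
  define t where "t = fst y - fst x"
  define n where "n = norm (snd y - snd x)"
  have "(norm v)\<^sup>2 = (\<Sum>i\<in>UNIV. (v $ i)\<^sup>2)" for v :: "real^'n"
    by (simp only: power2_norm_eq_inner) (simp add: inner_vec_def power2_eq_square)
  then have "mink_sq (y - x) = t\<^sup>2 - n\<^sup>2"
    by (simp add: mink_sq_def t_def n_def)
  moreover have "y - x = 0 \<longleftrightarrow> t = 0 \<and> n = 0"
    by (simp add: prod_eq_iff t_def n_def)
  ultimately have "causal_le x y \<longleftrightarrow> (t = 0 \<and> n = 0) \<or> (n\<^sup>2 \<le> t\<^sup>2 \<and> t > 0)"
    by (auto simp: causal_le_def t_def)
  also have "\<dots> \<longleftrightarrow> n \<le> t"
    using abs_le_square_iff[of n t] norm_ge_zero[of "snd y - snd x"] unfolding n_def[symmetric]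
    by (auto simp: abs_if split: if_splits)
  finally show ?thesis by (simp add: t_def n_def)
qed

lemma causal_le_trans:
  "causal_le x y \<Longrightarrow> causal_le y z \<Longrightarrow> causal_le x (z::'n::finite mpoint)"
  unfolding causal_le_iff_norm using norm_triangle_ineq[of "snd z - snd y" "snd y - snd x"] by simp

lemma causal_le_imp_fst_less:
  assumes "causal_le x y" "x \<noteq> y"
  shows "fst x < fst (y::'n::finite mpoint)"
proof (rule ccontr)
  assume "\<not> fst x < fst y"
  with assms(1) have "norm (snd y - snd x) = 0" "fst x = fst y"
    unfolding causal_le_iff_norm using norm_ge_zero[of "snd y - snd x"] by linarith+
  with assms(2) show False by (simp add: prod_eq_iff)
qed

lemma causal_le_antisym:
  assumes "causal_le x y" "causal_le y x"
  shows "x = (y::'n::finite mpoint)"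
proof (rule ccontr)
  assume "x \<noteq> y"
  then have "fst x < fst y" using causal_le_imp_fst_less[OF assms(1)] by simp
  moreover have "fst y < fst x" using causal_le_imp_fst_less[OF assms(2)] \<open>x \<noteq> y\<close> by simp
  ultimately show False by simp
qed

lemma causal_le_imp_norm_diff_le:
  assumes "causal_le x (y::'n::finite mpoint)"
  shows "norm (y - x) \<le> 2 * (fst y - fst x)"
proof -
  have "y - x = (fst y - fst x, snd y - snd x)" by (simp add: prod_eq_iff)
  then have "norm (y - x) \<le> norm (fst y - fst x) + norm (snd y - snd x)"
    using norm_Pair_le by metis
  moreover have "norm (snd y - snd x) \<le> fst y - fst x"
    using assms by (simp add: causal_le_iff_norm)
  ultimately show ?thesis using norm_ge_zero[of "snd y - snd x"] by (simp add: abs_of_nonneg)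
qed

text \<open>A point of least time in the finite set of points of S strictly above a and below x
  covers a.\<close>
lemma causal_cover_below:
  fixes S :: "'n::finite mpoint set"
  assumes locfin: "\<And>K. bounded K \<Longrightarrow> finite (S \<inter> K)"
    and "a \<in> S" "x \<in> S" "causal_le a x" "a \<noteq> x"
  obtains c where "covers_in S causal_le a c" "causal_le c x"
proof -
  define X where "X = {c \<in> S. causal_le a c \<and> a \<noteq> c \<and> causal_le c x}"
  have "X \<subseteq> S \<inter> cball x (2 * (fst x - fst a))"
  proof
    fix c assume c: "c \<in> X"
    then have "dist x c \<le> 2 * (fst x - fst c)" "fst a < fst c"
      using causal_le_imp_norm_diff_le[of c x] causal_le_imp_fst_less[of a c]
      unfolding X_def by (simp_all add: dist_norm)
    with c show "c \<in> S \<inter> cball x (2 * (fst x - fst a))" unfolding X_def by auto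
  qed
  then have "finite X" using locfin[OF bounded_cball] by (rule finite_subset)
  moreover have "x \<in> X" unfolding X_def using assms by (simp add: causal_le_iff_norm)
  ultimately obtain c where c: "is_arg_min fst (\<lambda>c. c \<in> X) c"
    using ex_is_arg_min_if_finite by blast
  then have cX: "c \<in> X" and cmin: "\<And>e. e \<in> X \<Longrightarrow> \<not> fst e < fst c"
    unfolding is_arg_min_def by auto
  have "covers_in S causal_le a c"
    unfolding covers_in_def
  proof (intro conjI)
    show "\<not> (\<exists>e\<in>S. causal_le a e \<and> a \<noteq> e \<and> causal_le e c \<and> e \<noteq> c)"
    proof
      assume "\<exists>e\<in>S. causal_le a e \<and> a \<noteq> e \<and> causal_le e c \<and> e \<noteq> c"
      then obtain e where e: "e \<in> S" "causal_le a e" "a \<noteq> e" "causal_le e c" "e \<noteq> c" by blast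
      then have "e \<in> X" using cX causal_le_trans unfolding X_def by blast
      with cmin causal_le_imp_fst_less[OF e(4,5)] show False by blast
    qed
  qed (use assms cX in \<open>auto simp: X_def\<close>)
  moreover have "causal_le c x" using cX unfolding X_def by simp
  ultimately show thesis by (rule that)
qed

lemma Lplus_causal_neq:
  fixes S :: "'n::finite mpoint set"
  assumes "\<And>K. bounded K \<Longrightarrow> finite (S \<inter> K)"
    and "a \<in> S" "x \<in> S" "causal_le a x" "a \<noteq> x" "\<not> causal_le b x"
  shows "Lplus S causal_le a \<noteq> Lplus S causal_le b"
proof -
  obtain c where ac: "covers_in S causal_le a c" and cx: "causal_le c x"
    using causal_cover_below assms(1-5) by blast
  from ac have "c \<in> Lplus S causal_le a" by (simp add: Lplus_def covers_in_def)
  moreover have "c \<notin> Lplus S causal_le b"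
  proof
    assume "c \<in> Lplus S causal_le b"
    then have "causal_le b c" by (simp add: Lplus_def covers_in_def)
    with cx assms(6) show False using causal_le_trans by blast
  qed
  ultimately show ?thesis by blast
qed

text \<open>When norm e = 1, (1, e) is a null direction; the spacing 3r makes the balls disjoint.\<close>
definition ray_ball :: "'n::finite mpoint \<Rightarrow> real^'n \<Rightarrow> real \<Rightarrow> nat \<Rightarrow> 'n mpoint set" where
  "ray_ball q e r k = cball (q + (3 * real k * r) *\<^sub>R (1, e)) r"

lemma ray_ball_causal:
  fixes a b q :: "'n::finite mpoint"
  assumes e: "norm e = 1" and r: "r > 0"
    and a: "norm (snd q - snd a) + 2 * r \<le> fst q - fst a"
    and b: "2 * r < e \<bullet> (snd q - snd b) - (fst q - fst b)"
    and x: "x \<in> ray_ball q e r k"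
  shows "causal_le a x" "a \<noteq> x" "\<not> causal_le b x"
proof -
  define s where "s = 3 * real k * r"
  define c where "c = q + s *\<^sub>R (1, e)"
  define v where "v = snd x - (snd q + s *\<^sub>R e)"
  have s: "s \<ge> 0" using r unfolding s_def by simp
  have "dist c x \<le> r" using x by (simp add: ray_ball_def c_def s_def)
  then have xt: "\<bar>fst x - (fst q + s)\<bar> \<le> r" and v: "norm v \<le> r"
    using dist_fst_le[of c x] dist_snd_le[of c x]
    by (simp_all add: c_def v_def dist_real_def dist_norm norm_minus_commute abs_minus_commute)
  have xs: "snd x - snd a = (snd q - snd a) + s *\<^sub>R e + v" by (simp add: v_def)
  have "norm (snd x - snd a) \<le> norm (snd q - snd a) + norm (s *\<^sub>R e) + norm v"
    unfolding xs by (rule norm_triangle_le) (rule add_right_mono, rule norm_triangle_ineq)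
  also have "\<dots> \<le> norm (snd q - snd a) + s + r" using e s v by simp
  finally show "causal_le a x" unfolding causal_le_iff_norm using a xt by (simp add: abs_le_iff)
  have "fst a < fst x"
    using a xt r s norm_ge_zero[of "snd q - snd a"] unfolding abs_le_iff by linarith
  then show "a \<noteq> x" by auto
  show "\<not> causal_le b x"
  proof
    assume "causal_le b x"
    then have "e \<bullet> (snd x - snd b) \<le> fst x - fst b"
      unfolding causal_le_iff_norm using norm_cauchy_schwarz[of e "snd x - snd b"] e by simp
    moreover have "e \<bullet> (snd x - snd b) = e \<bullet> (snd q - snd b) + s + e \<bullet> v"
    proof -
      have "snd x - snd b = (snd q - snd b) + s *\<^sub>R e + v" by (simp add: v_def)
      then show ?thesis using e by (simp only: inner_add_right inner_scaleR_right) (simp add: dot_square_norm)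
    qed
    moreover have "- r \<le> e \<bullet> v"
      using norm_cauchy_schwarz[of "- e" v] e v by simp
    ultimately show False using b xt by (simp add: abs_le_iff)
  qed
qed

lemma disjoint_family_ray_ball:
  assumes "r > 0"
  shows "disjoint_family (ray_ball q e r)"
proof -
  have t: "3 * r * real j - r \<le> fst x - fst q \<and> fst x - fst q \<le> 3 * r * real j + r"
    if "x \<in> ray_ball q e r j" for x j
    using that dist_fst_le[of "q + (3 * real j * r) *\<^sub>R (1, e)" x]
    by (simp add: ray_ball_def dist_real_def abs_le_iff algebra_simps)
  have "ray_ball q e r k \<inter> ray_ball q e r l = {}" if "k < l" for k l
  proof (intro equals0I)
    fix x assume "x \<in> ray_ball q e r k \<inter> ray_ball q e r l"
    then have "fst x - fst q \<le> 3 * r * real k + r" "3 * r * real l - r \<le> fst x - fst q"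
      using t by blast+
    moreover have "3 * r * (real k + 1) \<le> 3 * r * real l"
      using that assms by (intro mult_left_mono) auto
    ultimately show False using assms by (simp add: algebra_simps)
  qed
  then show ?thesis
    unfolding disjoint_family_on_def by (metis Int_commute linorder_neq_iff)
qed

lemma emeasure_ray_ball_Union:
  fixes q :: "'n::finite mpoint"
  assumes "r > 0"
  shows "emeasure lborel (\<Union>k. ray_ball q e r k) = \<infinity>"
proof -
  define c where "c = unit_ball_vol DIM('n mpoint) * r ^ DIM('n mpoint)"
  have "c > 0" using assms by (simp add: c_def)
  have "emeasure lborel (\<Union>k. ray_ball q e r k) = (\<Sum>k. emeasure lborel (ray_ball q e r k))"
  proof (rule suminf_emeasure[symmetric])
    show "range (ray_ball q e r) \<subseteq> sets lborel" by (auto simp: ray_ball_def)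
  qed (rule disjoint_family_ray_ball[OF assms])
  also have "\<dots> = (\<Sum>k::nat. ennreal c)"
    using assms by (simp add: ray_ball_def emeasure_cball c_def)
  also have "\<dots> = \<infinity>"
    unfolding infinity_ennreal_def
    using \<open>c > 0\<close> by (intro summable_iff_suminf_neq_top) (simp_all add: summable_const_iff)
  finally show ?thesis .
qed

lemma exists_dense_direction:
  fixes w :: "'a::euclidean_space"
  assumes dense: "\<And>U. open U \<Longrightarrow> U \<noteq> {} \<Longrightarrow> \<exists>d\<in>D. d \<in> U" and "t < norm w"
  obtains d where "d \<in> D" "d \<noteq> 0" "t < (d /\<^sub>R norm d) \<bullet> w"
proof -
  define U where "U = {d. t * norm d < d \<bullet> w}"
  have "open U" unfolding U_def by (intro open_Collect_less continuous_intros)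
  moreover have "U \<noteq> {}"
  proof (cases "w = 0")
    case True
    obtain b :: 'a where "b \<in> Basis" using nonempty_Basis by blast
    then have "b \<in> U" using True assms(2) by (simp add: U_def)
    then show ?thesis by blast
  next
    case False
    then have "w \<in> U" using assms(2) by (simp add: U_def dot_square_norm power2_eq_square)
    then show ?thesis by blast
  qed
  ultimately obtain d where d: "d \<in> D" "d \<in> U" using dense by blast
  then have "d \<noteq> 0" by (auto simp: U_def)
  moreover from d have "t < (d /\<^sub>R norm d) \<bullet> w"
    using \<open>d \<noteq> 0\<close> by (simp add: U_def inverse_eq_divide pos_less_divide_eq mult.commute)
  ultimately show thesis using d that by blast
qed

text \<open>The ray starts just above a and runs in a null direction pointing spatially away
  from b, up to a small error, so it stays outside the future cone of b.\<close>
lemma exists_ray_ball_causal: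
  fixes a b :: "'n::finite mpoint"
  assumes ba: "\<not> causal_le b a"
    and D: "\<And>U. open U \<Longrightarrow> U \<noteq> {} \<Longrightarrow> \<exists>q\<in>D. q \<in> U"
    and Dn: "\<And>U. open U \<Longrightarrow> U \<noteq> {} \<Longrightarrow> \<exists>d\<in>Dn. d \<in> U"
  obtains q d m where "q \<in> D" "d \<in> Dn"
    "\<And>k x. x \<in> ray_ball q (d /\<^sub>R norm d) (1 / real (Suc m)) k \<Longrightarrow>
       causal_le a x \<and> a \<noteq> x \<and> \<not> causal_le b x"
proof -
  define \<delta> where "\<delta> = norm (snd a - snd b) - (fst a - fst b)"
  have \<delta>: "\<delta> > 0" using ba unfolding \<delta>_def causal_le_iff_norm by simp
  have "fst a - fst b + \<delta> / 2 < norm (snd a - snd b)" using \<delta> by (simp add: \<delta>_def field_simps)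
  then obtain d where d: "d \<in> Dn" "d \<noteq> 0"
    and de: "fst a - fst b + \<delta> / 2 < (d /\<^sub>R norm d) \<bullet> (snd a - snd b)"
    using exists_dense_direction[OF Dn] by blast
  define e where "e = d /\<^sub>R norm d"
  have e: "norm e = 1" using d(2) by (simp add: e_def)
  obtain m :: nat where "10 / \<delta> < real m" using reals_Archimedean2 by blast
  then have m: "10 < \<delta> * real (Suc m)" using \<delta> by (simp add: pos_divide_less_eq algebra_simps)
  define r where "r = 1 / real (Suc m)"
  have r: "r > 0" "10 * r < \<delta>"
    using m by (simp_all add: r_def pos_divide_less_eq mult.commute)
  define V where "V = {q. norm (snd q - snd a) + 2 * r < fst q - fst a} \<inter>
    {q. 2 * r < e \<bullet> (snd q - snd b) - (fst q - fst b)}"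
  have "open V" unfolding V_def by (intro open_Int open_Collect_less continuous_intros)
  moreover have "a + (3 * r, 0) \<in> V" using de r by (simp add: V_def e_def)
  ultimately obtain q where q: "q \<in> D" "q \<in> V" using D by blast
  show thesis
  proof (rule that[OF q(1) d(1)])
    fix k x
    assume "x \<in> ray_ball q (d /\<^sub>R norm d) (1 / real (Suc m)) k"
    then show "causal_le a x \<and> a \<noteq> x \<and> \<not> causal_le b x"
      using ray_ball_causal[OF e r(1), of q a b x k] q(2) by (simp add: V_def e_def r_def)
  qed
qed

lemma no_singleton_symmetric_if_meets_ray_balls:
  fixes S :: "'n::finite mpoint set"
  assumes locfin: "\<And>K. bounded K \<Longrightarrow> finite (S \<inter> K)"
    and D: "\<And>U. open U \<Longrightarrow> U \<noteq> {} \<Longrightarrow> \<exists>q\<in>D. q \<in> U"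
    and Dn: "\<And>U. open U \<Longrightarrow> U \<noteq> {} \<Longrightarrow> \<exists>d\<in>Dn. d \<in> U"
    and meets: "\<And>q d m. q \<in> D \<Longrightarrow> d \<in> Dn \<Longrightarrow>
      S \<inter> (\<Union>k. ray_ball q (d /\<^sub>R norm d) (1 / real (Suc m)) k) \<noteq> {}"
  shows "\<not> (\<exists>a\<in>S. \<exists>b\<in>S. a \<noteq> b \<and> singleton_symmetric S causal_le a b)"
proof -
  have neq: "Lplus S causal_le a \<noteq> Lplus S causal_le b" if a: "a \<in> S" and ba: "\<not> causal_le b a" for a b
  proof -
    obtain q d m where "q \<in> D" "d \<in> Dn" and ray: "\<And>k x. x \<in> ray_ball q (d /\<^sub>R norm d) (1 / real (Suc m)) k \<Longrightarrow>
       causal_le a x \<and> a \<noteq> x \<and> \<not> causal_le b x"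
      using exists_ray_ball_causal[OF ba D Dn] by blast
    then obtain x k where "x \<in> S" "x \<in> ray_ball q (d /\<^sub>R norm d) (1 / real (Suc m)) k"
      using meets by blast
    with ray show ?thesis using Lplus_causal_neq[OF locfin a] by blast
  qed
  show ?thesis
  proof
    assume "\<exists>a\<in>S. \<exists>b\<in>S. a \<noteq> b \<and> singleton_symmetric S causal_le a b"
    then obtain a b where ab: "a \<in> S" "b \<in> S" "a \<noteq> b"
      and eq: "Lplus S causal_le a = Lplus S causal_le b"
      unfolding singleton_symmetric_def by blast
    consider "\<not> causal_le b a" | "\<not> causal_le a b" using causal_le_antisym ab(3) by blast
    then show False
    proof cases
      case 1
      with neq[OF ab(1) 1] eq show False by simp
    next
      case 2
      with neq[OF ab(2) 2] eq show False by simp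
    qed
  qed
qed

lemma poisson_point_process_finite_volume:
  assumes "poisson_point_process M \<rho> S" "A \<in> sets lborel" "emeasure lborel A < \<infinity>"
  shows "AE \<omega> in M. finite (S \<omega> \<inter> A)"
    and "(\<lambda>\<omega>. card (S \<omega> \<inter> A)) \<in> measurable M (count_space UNIV)"
    and "measure M {\<omega> \<in> space M. card (S \<omega> \<inter> A) = k} =
      (\<rho> * measure lborel A) ^ k / fact k * exp (- (\<rho> * measure lborel A))"
  using assms(1)[unfolded poisson_point_process_def, THEN conjunct1, rule_format, OF conjI[OF assms(2,3)]]
  by simp_all

lemma poisson_point_process_void_prob:
  assumes "poisson_point_process M \<rho> S" "A \<in> sets lborel" "emeasure lborel A < \<infinity>"
  shows "{\<omega> \<in> space M. card (S \<omega> \<inter> A) = 0} \<in> sets M"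
    and "measure M {\<omega> \<in> space M. card (S \<omega> \<inter> A) = 0} = exp (- (\<rho> * measure lborel A))"
  using poisson_point_process_finite_volume(2)[OF assms]
    poisson_point_process_finite_volume(3)[OF assms, of 0]
  by (simp_all add: measurable_count_space_eq2)

lemma emeasure_Int_cball_finite: "emeasure lborel (A \<inter> cball c r) < \<infinity>"
proof -
  have "emeasure lborel (A \<inter> cball c r) \<le> emeasure lborel (cball c r)"
    by (rule emeasure_mono) auto
  then show ?thesis using emeasure_lborel_cball_finite by (rule le_less_trans)
qed

lemma measure_Int_cball_unbounded:
  fixes A :: "'a::euclidean_space set"
  assumes A: "A \<in> sets lborel" "emeasure lborel A = \<infinity>"
  obtains n :: nat where "y < measure lborel (A \<inter> cball 0 (real n))"
proof -
  define A' where "A' n = A \<inter> cball 0 (real n)" for n :: nat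
  have "incseq A'"
    unfolding A'_def incseq_def by (intro allI impI Int_mono order_refl subset_cball) simp
  have "x \<in> (\<Union>n. A' n)" if "x \<in> A" for x
  proof -
    obtain n where "norm x \<le> real n" using real_arch_simple by blast
    with that have "x \<in> A' n" by (simp add: A'_def)
    then show ?thesis by blast
  qed
  then have "(\<Union>n. A' n) = A" unfolding A'_def by blast
  have "range A' \<subseteq> sets lborel" using A(1) by (auto simp: A'_def)
  with \<open>incseq A'\<close> have "(SUP n. emeasure lborel (A' n)) = emeasure lborel (\<Union>n. A' n)"
    by (intro SUP_emeasure_incseq)
  also have "\<dots> = \<infinity>" using A(2) \<open>(\<Union>n. A' n) = A\<close> by simp
  finally have SUP_inf: "(SUP n. emeasure lborel (A' n)) = \<infinity>" .
  have "ennreal (max y 0) < (SUP n. emeasure lborel (A' n))" unfolding SUP_inf by simp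
  then obtain n where "ennreal (max y 0) < emeasure lborel (A' n)" unfolding less_SUP_iff by blast
  moreover have "emeasure lborel (A' n) = ennreal (measure lborel (A' n))"
    using emeasure_Int_cball_finite[of A 0 "real n"] unfolding A'_def
    by (intro emeasure_eq_ennreal_measure) (simp add: less_top)
  ultimately have "max y 0 < measure lborel (A' n)" by (metis ennreal_less_iff max.cobounded2)
  then show thesis using that unfolding A'_def by auto
qed

text \<open>The void probabilities of the bounded parts of A tend to 0.\<close>
lemma poisson_point_process_AE_meets:
  fixes S :: "'b \<Rightarrow> 'a::euclidean_space set"
  assumes "prob_space M" "\<rho> > 0" and ppp: "poisson_point_process M \<rho> S"
    and A: "A \<in> sets lborel" "emeasure lborel A = \<infinity>"
  shows "AE \<omega> in M. S \<omega> \<inter> A \<noteq> {}"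
proof -
  interpret prob_space M by fact
  define A' where "A' n = A \<inter> cball 0 (real n)" for n :: nat
  have A'_sets: "A' n \<in> sets lborel" and A'_fin: "emeasure lborel (A' n) < \<infinity>" for n
    unfolding A'_def using A(1) emeasure_Int_cball_finite[of A 0 "real n"] by simp_all
  note void = poisson_point_process_void_prob[OF ppp A'_sets A'_fin]
  define B where "B = {\<omega> \<in> space M. \<forall>n. card (S \<omega> \<inter> A' n) = 0}"
  have B: "B \<in> sets M"
    unfolding B_def by (rule sets.sets_Collect_countable_All) (rule void(1))
  have "prob B \<le> 0 + \<epsilon>" if "\<epsilon> > 0" for \<epsilon>
  proof -
    obtain n where n: "- ln \<epsilon> / \<rho> < measure lborel (A' n)"
      unfolding A'_def using measure_Int_cball_unbounded[OF A] by blast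
    have "prob B \<le> prob {\<omega> \<in> space M. card (S \<omega> \<inter> A' n) = 0}"
      using void(1) by (intro finite_measure_mono) (auto simp: B_def)
    also have "\<dots> = exp (- (\<rho> * measure lborel (A' n)))"
      by (rule void(2))
    also have "\<dots> < exp (ln \<epsilon>)"
    proof -
      have "- ln \<epsilon> / \<rho> * \<rho> < measure lborel (A' n) * \<rho>"
        using n \<open>\<rho> > 0\<close> by (rule mult_strict_right_mono)
      then show ?thesis using \<open>\<rho> > 0\<close> by (simp add: mult.commute)
    qed
    finally show ?thesis using that by simp
  qed
  then have "prob B \<le> 0" by (rule field_le_epsilon)
  then have "B \<in> null_sets M"
    using B measure_nonneg[of M B] by (simp add: emeasure_eq_measure null_setsI)
  moreover have "{\<omega> \<in> space M. \<not> S \<omega> \<inter> A \<noteq> {}} \<subseteq> B"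
  proof
    fix \<omega> assume "\<omega> \<in> {\<omega> \<in> space M. \<not> S \<omega> \<inter> A \<noteq> {}}"
    then have "\<omega> \<in> space M" "S \<omega> \<inter> A' n = {}" for n
      unfolding A'_def by blast+
    then show "\<omega> \<in> B" unfolding B_def by simp
  qed
  ultimately show ?thesis by (rule AE_I')
qed

lemma poisson_point_process_AE_locally_finite:
  fixes S :: "'b \<Rightarrow> 'a::euclidean_space set"
  assumes "poisson_point_process M \<rho> S"
  shows "AE \<omega> in M. \<forall>K. bounded K \<longrightarrow> finite (S \<omega> \<inter> K)"
proof -
  have "AE \<omega> in M. finite (S \<omega> \<inter> cball 0 (real n))" for n :: nat
    using emeasure_lborel_cball_finite by (intro poisson_point_process_finite_volume(1)[OF assms]) simp_all
  then have "AE \<omega> in M. \<forall>n::nat. finite (S \<omega> \<inter> cball 0 (real n))" by (simp add: AE_all_countable)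
  moreover have "\<forall>K. bounded K \<longrightarrow> finite (T \<inter> K)"
    if fin: "\<forall>n::nat. finite (T \<inter> cball 0 (real n))" for T :: "'a set"
  proof (intro allI impI)
    fix K :: "'a set" assume "bounded K"
    then obtain B where "\<forall>x\<in>K. norm x \<le> B" using bounded_iff by blast
    moreover obtain n :: nat where "B \<le> real n" using real_arch_simple by blast
    ultimately have "T \<inter> K \<subseteq> T \<inter> cball 0 (real n)" by auto
    then show "finite (T \<inter> K)" using fin finite_subset by blast
  qed
  ultimately show ?thesis by (rule eventually_mono)
qed

lemma poisson_point_process_AE_meets_ray_balls:
  fixes S :: "'b \<Rightarrow> 'n::finite mpoint set"
  assumes "prob_space M" "\<rho> > 0" "poisson_point_process M \<rho> S" "countable D" "countable Dn"
  shows "AE \<omega> in M. \<forall>q\<in>D. \<forall>d\<in>Dn. \<forall>m.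
    S \<omega> \<inter> (\<Union>k. ray_ball q (d /\<^sub>R norm d) (1 / real (Suc m)) k) \<noteq> {}"
proof -
  have "AE \<omega> in M. S \<omega> \<inter> (\<Union>k. ray_ball q e r k) \<noteq> {}" if "r > 0" for q :: "'n mpoint" and e r
  proof (rule poisson_point_process_AE_meets[OF assms(1-3)])
    show "(\<Union>k. ray_ball q e r k) \<in> sets lborel" by (auto simp: ray_ball_def)
    show "emeasure lborel (\<Union>k. ray_ball q e r k) = \<infinity>" using that by (rule emeasure_ray_ball_Union)
  qed
  then show ?thesis using assms(4,5) by (simp add: AE_ball_countable AE_all_countable)
qed

theorem mainTheorem16:
  fixes M :: "'b measure" and \<rho> :: real and S :: "'b \<Rightarrow> ('n::finite) mpoint set"
  assumes "prob_space M"
    and "\<rho> > 0"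
    and "poisson_point_process M \<rho> S"
  shows "AE \<omega> in M. \<not> (\<exists>a\<in>S \<omega>. \<exists>b\<in>S \<omega>. a \<noteq> b \<and> singleton_symmetric (S \<omega>) causal_le a b)"
proof -
  obtain D :: "'n mpoint set" where D: "countable D" "\<And>U. open U \<Longrightarrow> U \<noteq> {} \<Longrightarrow> \<exists>q\<in>D. q \<in> U"
    using countable_dense_exists by blast
  obtain Dn :: "(real^'n) set" where Dn: "countable Dn" "\<And>U. open U \<Longrightarrow> U \<noteq> {} \<Longrightarrow> \<exists>d\<in>Dn. d \<in> U"
    using countable_dense_exists by blast
  have "AE \<omega> in M. \<forall>q\<in>D. \<forall>d\<in>Dn. \<forall>m.
      S \<omega> \<inter> (\<Union>k. ray_ball q (d /\<^sub>R norm d) (1 / real (Suc m)) k) \<noteq> {}"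
    by (rule poisson_point_process_AE_meets_ray_balls[OF assms D(1) Dn(1)])
  moreover have "AE \<omega> in M. \<forall>K. bounded K \<longrightarrow> finite (S \<omega> \<inter> K)"
    by (rule poisson_point_process_AE_locally_finite[OF assms(3)])
  ultimately show ?thesis
  proof (rule eventually_elim2)
    fix \<omega>
    assume "\<forall>q\<in>D. \<forall>d\<in>Dn. \<forall>m. S \<omega> \<inter> (\<Union>k. ray_ball q (d /\<^sub>R norm d) (1 / real (Suc m)) k) \<noteq> {}"
      and "\<forall>K. bounded K \<longrightarrow> finite (S \<omega> \<inter> K)"
    then show "\<not> (\<exists>a\<in>S \<omega>. \<exists>b\<in>S \<omega>. a \<noteq> b \<and> singleton_symmetric (S \<omega>) causal_le a b)"
      by (intro no_singleton_symmetric_if_meets_ray_balls[OF _ D(2) Dn(2)]) blast+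
  qed
qed

end
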